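(* Let $I$ be a general ring and $a\in I$. The following are equivalent: (1) $a$ is quasipolar in $I$; (2) there exists $b\in\mathrm{comm}^2(a)$ such that $ab^2=b$ and $a^2b-a\in QN(I)$. Moreover, an element $b$ as in (2), if it exists, is unique.
   Context: A general ring is an associative ring not necessarily having an identity. For $p,q\in I$, $p*q=p+q-pq$; $Q(I)=\{q\in I\mid p*q=0=q*p \text{ for some } p\in I\}$; $\mathrm{comm}(a)=\{x\in I\mid xa=ax\}$, $\mathrm{comm}^2(a)=\{x\in I\mid xy=yx\text{ for all }y\in\mathrm{comm}(a)\}$; $QN(I)=\{q\in I\mid qx\in Q(I)\text{ for every }x\in\mathrm{comm}(q)\}$. An element $a\in I$ is quasipolar in $I$ if there is an idempotent $p=p^2\in\mathrm{comm}^2(a)$ with $a+p\in Q(I)$ and $a-ap\in QN(I)$. *)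

theory Defs
  imports Main
begin

text \<open>General rings (associative, not necessarily unital) are modelled by the
type class ring, which does not require a multiplicative identity.\<close>

definition circ :: "'a::ring \<Rightarrow> 'a \<Rightarrow> 'a" where
  "circ p q = p + q - p * q"

definition Qset :: "'a::ring set" where
  "Qset = {q. \<exists>p. circ p q = 0 \<and> circ q p = 0}"

definition comm :: "'a::ring \<Rightarrow> 'a set" where
  "comm a = {x. x * a = a * x}"

definition comm2 :: "'a::ring \<Rightarrow> 'a set" where
  "comm2 a = {x. \<forall>y\<in>comm a. x * y = y * x}"

definition QN :: "'a::ring set" where
  "QN = {q. \<forall>x\<in>comm q. q * x \<in> Qset}"

definition quasipolar :: "'a::ring \<Rightarrow> bool" where
  "quasipolar a \<longleftrightarrow> (\<exists>p. p * p = p \<and> p \<in> comm2 a \<and> a + p \<in> Qset \<and> a - a * p \<in> QN)"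

end

theory Submission
  imports Defs
begin

text \<open>If a is quasipolar with spectral
  idempotent p and q is the quasi-inverse of a + p, then b = q p - p works and
  a b = p. Conversely p = a b is idempotent, and a + p splits into the orthogonal
  summands a - a p, which is quasinilpotent and hence quasi-regular, and
  a p + p, whose quasi-inverse is p + b. For uniqueness, a b1 - a b1 a b2
  is an idempotent of the form (a a b2 - a) (- b1) and hence quasi-regular,
  so it vanishes; symmetrically a b1 = a b2, and b = (a b) b.\<close>

definition is_gdrazin_inverse :: "'a::ring \<Rightarrow> 'a \<Rightarrow> bool" where
  "is_gdrazin_inverse a b \<longleftrightarrow> b \<in> comm2 a \<and> a * (b * b) = b \<and> a * a * b - a \<in> QN"

lemma left_commute_of_commute:
  fixes x y z :: "'a::semigroup_mult"
  assumes "x * y = y * x"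
  shows "x * (y * z) = y * (x * z)"
  using assms by (metis mult.assoc)

lemma self_mem_comm2: "a \<in> comm2 a"
  by (simp add: comm2_def comm_def)

lemma comm2_subset_comm: "comm2 a \<subseteq> comm a"
  by (auto simp: comm2_def comm_def)

lemma comm2_commute: "x \<in> comm2 a \<Longrightarrow> y \<in> comm2 a \<Longrightarrow> x * y = y * x"
  using comm2_subset_comm by (auto simp: comm2_def)

lemma comm2_add: "x \<in> comm2 a \<Longrightarrow> y \<in> comm2 a \<Longrightarrow> x + y \<in> comm2 a"
  by (simp add: comm2_def algebra_simps)

lemma comm2_diff: "x \<in> comm2 a \<Longrightarrow> y \<in> comm2 a \<Longrightarrow> x - y \<in> comm2 a"
  by (simp add: comm2_def algebra_simps)

lemma comm2_mult:
  assumes "x \<in> comm2 a" "y \<in> comm2 a"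
  shows "x * y \<in> comm2 a"
  unfolding comm2_def
proof (intro CollectI ballI)
  fix z assume "z \<in> comm a"
  then have "x * z = z * x" "y * z = z * y"
    using assms by (auto simp: comm2_def)
  then show "x * y * z = z * (x * y)"
    by (metis mult.assoc)
qed

lemma circ_inverse_commute:
  fixes q s x :: "'a::ring"
  assumes "circ q s = 0" "circ s q = 0" "x * s = s * x"
  shows "x * q = q * x"
proof -
  have qs: "q + s - q * s = 0" and sq: "s + q - s * q = 0"
    using assms by (simp_all add: circ_def)
  have sx: "\<And>y. s * (x * y) = x * (s * y)"
    using assms(3)[symmetric] by (rule left_commute_of_commute)
  \<comment> \<open>in the unitization: x (1 - q) = (1 - q) (1 - s) x (1 - q) = (1 - q) x (1 - s) (1 - q) = (1 - q) x\<close>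
  have "x - x * q = (x - x * q) - (q + s - q * s) * (x - x * q)"
    using qs by simp
  also have "\<dots> = (x - q * x) - (x - q * x) * (s + q - s * q)"
    by (simp add: algebra_simps assms(3) sx)
  also have "\<dots> = x - q * x"
    using sq by simp
  finally show ?thesis by simp
qed

lemma circ_inverse_mem_comm2:
  assumes "circ q u = 0" "circ u q = 0" "u \<in> comm2 a"
  shows "q \<in> comm2 a"
  using assms circ_inverse_commute[OF assms(1,2)] by (auto simp: comm2_def)

lemma circ_add_orthogonal:
  fixes x x' y y' :: "'a::ring"
  assumes x: "circ x' x = 0" "circ x x' = 0" and y: "circ y' y = 0" "circ y y' = 0"
    and orth: "x * y = 0" "y * x = 0"
  shows "circ (x' + y') (x + y) = 0" "circ (x + y) (x' + y') = 0"
proof -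
  have x'_eq: "x' = x' * x - x" "x' = x * x' - x"
    using x by (simp_all add: circ_def algebra_simps)
  have y'_eq: "y' = y' * y - y" "y' = y * y' - y"
    using y by (simp_all add: circ_def algebra_simps)
  \<comment> \<open>the cross terms of the quasi-inverses vanish because x and y annihilate each other\<close>
  have "x' * y = 0"
    by (subst x'_eq(1)) (simp add: algebra_simps orth)
  moreover have "y' * x = 0"
    by (subst y'_eq(1)) (simp add: algebra_simps orth)
  moreover have "x * y' = 0"
    by (subst y'_eq(2)) (simp add: algebra_simps orth flip: mult.assoc)
  moreover have "y * x' = 0"
    by (subst x'_eq(2)) (simp add: algebra_simps orth flip: mult.assoc)
  ultimately show "circ (x' + y') (x + y) = 0" "circ (x + y) (x' + y') = 0"
    using x y by (simp_all add: circ_def algebra_simps)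
qed

lemma Qset_add_orthogonal:
  assumes "x \<in> Qset" "y \<in> Qset" "x * y = 0" "y * x = 0"
  shows "x + y \<in> Qset"
  using assms circ_add_orthogonal unfolding Qset_def by blast

lemma idempotent_Qset_eq_0:
  fixes e :: "'a::ring"
  assumes "e * e = e" "e \<in> Qset"
  shows "e = 0"
proof -
  obtain t where "circ t e = 0"
    using assms(2) unfolding Qset_def by blast
  then have "(t + e - t * e) * e = 0"
    by (simp add: circ_def)
  then have "t * e + e * e - t * (e * e) = 0"
    by (simp add: algebra_simps)
  then show ?thesis
    using assms(1) by simp
qed

lemma idempotent_diff_mult:
  fixes x y :: "'a::ring"
  assumes "x * x = x" "y * y = y" "y * x = x * y"
  shows "(x - x * y) * (x - x * y) = x - x * y"
proof -
  have "\<And>z. x * (x * z) = x * z" "\<And>z. y * (y * z) = y * z"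
    using assms(1,2) by (simp_all flip: mult.assoc)
  moreover have "\<And>z. y * (x * z) = x * (y * z)"
    using assms(3) by (rule left_commute_of_commute)
  ultimately show ?thesis
    using assms by (simp add: algebra_simps)
qed

lemma uminus_QN:
  assumes "c \<in> QN"
  shows "- c \<in> QN"
  unfolding QN_def
proof (intro CollectI ballI)
  fix x assume "x \<in> comm (- c)"
  then have "- x \<in> comm c"
    by (simp add: comm_def)
  then have "c * (- x) \<in> Qset"
    using assms unfolding QN_def by blast
  then show "- c * x \<in> Qset"
    by simp
qed

lemma QN_imp_Qset:
  fixes c :: "'a::ring"
  assumes "c \<in> QN"
  shows "c \<in> Qset"
proof -
  have "c * c \<in> Qset"
    using assms by (simp add: QN_def comm_def)
  then obtain r where r: "circ r (c * c) = 0" "circ (c * c) r = 0"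
    unfolding Qset_def by blast
  have rc: "c * r = r * c"
    by (rule circ_inverse_commute[OF r]) (simp add: mult.assoc)
  \<comment> \<open>in the unitization, 1 - s = (1 - r) (1 + c) inverts 1 - c because (1 + c) (1 - c) = 1 - c c\<close>
  define s where "s = r - c + c * r"
  have "circ s c = circ r (c * c)"
    by (simp add: s_def circ_def algebra_simps rc)
  moreover have "circ c s = circ (c * c) r"
    by (simp add: s_def circ_def algebra_simps)
  ultimately show ?thesis
    using r unfolding Qset_def by auto
qed

lemma gdrazin_inverse_of_quasipolar:
  fixes a :: "'a::ring"
  assumes "quasipolar a"
  shows "\<exists>b. is_gdrazin_inverse a b"
proof -
  obtain p where pp: "p * p = p" and pc: "p \<in> comm2 a"
    and pQ: "a + p \<in> Qset" and pN: "a - a * p \<in> QN"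
    using assms unfolding quasipolar_def by blast
  obtain q where q: "circ q (a + p) = 0" "circ (a + p) q = 0"
    using pQ unfolding Qset_def by blast
  have qc: "q \<in> comm2 a"
    using q comm2_add[OF self_mem_comm2 pc] by (rule circ_inverse_mem_comm2)
  note qa = comm2_commute[OF self_mem_comm2 qc] and qp = comm2_commute[OF pc qc]
  define b where "b = q * p - p"
  have "(q + (a + p) - q * (a + p)) * p = 0"
    using q(1) by (simp add: circ_def)
  then have qap: "q * (a * p) = a * p + p"
    using pp by (simp add: algebra_simps)
  have ab: "a * b = p"
    using qap by (simp add: b_def algebra_simps qa flip: mult.assoc)
  have pqp: "p * (q * p) = q * p"
    by (metis mult.assoc pp qp)
  have "a * (b * b) = (a * b) * b"
    by (simp add: mult.assoc)
  also have "\<dots> = b"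
    using ab pqp pp by (simp add: b_def algebra_simps)
  finally have "a * (b * b) = b" .
  moreover have "b \<in> comm2 a"
    unfolding b_def by (intro comm2_diff comm2_mult qc pc)
  moreover have "a * a * b - a = - (a - a * p)"
    using ab by (simp add: mult.assoc)
  ultimately show ?thesis
    using uminus_QN[OF pN] unfolding is_gdrazin_inverse_def by auto
qed

lemma quasipolar_of_gdrazin_inverse:
  fixes a b :: "'a::ring"
  assumes "is_gdrazin_inverse a b"
  shows "quasipolar a"
proof -
  have bc: "b \<in> comm2 a" and abb: "a * (b * b) = b" and N: "a * a * b - a \<in> QN"
    using assms unfolding is_gdrazin_inverse_def by blast+
  define p where "p = a * b"
  have pc: "p \<in> comm2 a"
    unfolding p_def by (intro comm2_mult self_mem_comm2 bc)
  note ba = comm2_commute[OF bc self_mem_comm2] and pa = comm2_commute[OF pc self_mem_comm2]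
  note ba' = left_commute_of_commute[OF ba]
  have ab: "a * b = p" and pp: "p * p = p" and pb: "p * b = b" and bp: "b * p = b"
    unfolding p_def using abb by (simp_all add: mult.assoc ba')
  have bap: "b * (a * p) = p"
    by (metis mult.assoc ba ab pp)
  have pap: "p * (a * p) = a * p"
    by (metis mult.assoc pa pp)
  define c where "c = a - a * p"
  have cN: "c \<in> QN"
    using uminus_QN[OF N] by (simp add: c_def p_def mult.assoc)
  have "circ (p + b) (a * p + p) = 0" "circ (a * p + p) (p + b) = 0"
    using ab pp pb bp bap pap by (simp_all add: circ_def algebra_simps)
  then have "a * p + p \<in> Qset"
    unfolding Qset_def by blast
  moreover have "c * (a * p + p) = 0" "(a * p + p) * c = 0"
    using pp pa pap by (simp_all add: c_def algebra_simps)
  ultimately have "c + (a * p + p) \<in> Qset"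
    using Qset_add_orthogonal QN_imp_Qset[OF cN] by blast
  then have "a + p \<in> Qset"
    by (simp add: c_def)
  then show ?thesis
    unfolding quasipolar_def using pp pc cN c_def by blast
qed

lemma gdrazin_inverse_absorbs:
  fixes a b1 b2 :: "'a::ring"
  assumes b1: "is_gdrazin_inverse a b1" and b2: "is_gdrazin_inverse a b2"
  shows "a * b1 = a * b1 * (a * b2)"
proof -
  have b1c: "b1 \<in> comm2 a" and a1: "a * (b1 * b1) = b1"
    and b2c: "b2 \<in> comm2 a" and a2: "a * (b2 * b2) = b2" and N2: "a * a * b2 - a \<in> QN"
    using b1 b2 unfolding is_gdrazin_inverse_def by blast+
  note ba1 = left_commute_of_commute[OF comm2_commute[OF b1c self_mem_comm2]]
    and ba2 = left_commute_of_commute[OF comm2_commute[OF b2c self_mem_comm2]]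
    and b12 = left_commute_of_commute[OF comm2_commute[OF b1c b2c]]
  note b1a = comm2_commute[OF b1c self_mem_comm2] and b1b2 = comm2_commute[OF b1c b2c]
  define c where "c = a * a * b2 - a"
  have "c \<in> comm2 a"
    unfolding c_def by (intro comm2_diff comm2_mult self_mem_comm2 b2c)
  then have "- b1 \<in> comm c"
    using comm2_commute[OF b1c] by (simp add: comm_def)
  then have "c * (- b1) \<in> Qset"
    using N2 unfolding QN_def c_def by blast
  moreover have "c * (- b1) = a * b1 - a * b1 * (a * b2)"
    unfolding c_def by (simp add: algebra_simps b1a ba1 b12 b1b2)
  moreover have "(a * b1 - a * b1 * (a * b2)) * (a * b1 - a * b1 * (a * b2)) = a * b1 - a * b1 * (a * b2)"
  proof (rule idempotent_diff_mult)
    show "a * b1 * (a * b1) = a * b1" "a * b2 * (a * b2) = a * b2"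
      using a1 a2 by (simp_all add: mult.assoc ba1 ba2)
    show "a * b2 * (a * b1) = a * b1 * (a * b2)"
      by (simp add: mult.assoc ba1 ba2 b12 b1b2)
  qed
  ultimately have "a * b1 - a * b1 * (a * b2) = 0"
    using idempotent_Qset_eq_0 by metis
  then show ?thesis
    by simp
qed

lemma gdrazin_inverse_unique:
  fixes a b1 b2 :: "'a::ring"
  assumes b1: "is_gdrazin_inverse a b1" and b2: "is_gdrazin_inverse a b2"
  shows "b1 = b2"
proof -
  have b1c: "b1 \<in> comm2 a" and a1: "a * (b1 * b1) = b1"
    and b2c: "b2 \<in> comm2 a" and a2: "a * (b2 * b2) = b2"
    using b1 b2 unfolding is_gdrazin_inverse_def by blast+
  note ba1 = left_commute_of_commute[OF comm2_commute[OF b1c self_mem_comm2]]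
    and ba2 = left_commute_of_commute[OF comm2_commute[OF b2c self_mem_comm2]]
    and b12 = left_commute_of_commute[OF comm2_commute[OF b1c b2c]]
  note b1b2 = comm2_commute[OF b1c b2c]
  have "a * b1 = a * b1 * (a * b2)"
    using b1 b2 by (rule gdrazin_inverse_absorbs)
  also have "\<dots> = a * b2 * (a * b1)"
    by (simp add: mult.assoc ba1 ba2 b12 b1b2)
  also have "\<dots> = a * b2"
    using b2 b1 by (rule gdrazin_inverse_absorbs[symmetric])
  finally have ab: "a * b1 = a * b2" .
  have "b1 = b1 * (a * b1)"
    using a1 by (simp add: ba1)
  also have "\<dots> = b1 * (a * b2)"
    by (simp only: ab)
  also have "\<dots> = a * b1 * b2"
    by (simp add: mult.assoc ba1)
  also have "\<dots> = a * b2 * b2"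
    by (simp only: ab)
  also have "\<dots> = b2"
    using a2 by (simp add: mult.assoc)
  finally show ?thesis .
qed

theorem theorem2p8:
  fixes a :: "'a::ring"
  shows "(quasipolar a \<longleftrightarrow>
            (\<exists>b\<in>comm2 a. a * (b * b) = b \<and> a * a * b - a \<in> QN)) \<and>
         (\<forall>b1 b2. b1 \<in> comm2 a \<and> a * (b1 * b1) = b1 \<and> a * a * b1 - a \<in> QN \<and>
                  b2 \<in> comm2 a \<and> a * (b2 * b2) = b2 \<and> a * a * b2 - a \<in> QN \<longrightarrow> b1 = b2)"
  using gdrazin_inverse_of_quasipolar quasipolar_of_gdrazin_inverse gdrazin_inverse_unique
  unfolding is_gdrazin_inverse_def by blast

end
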